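(* Let $v$ be an integrable function on $[0,\infty)$ and suppose there exist two integrable functions $z_1,z_2$ on $[0,\infty)$ such that $$z_1(x)\le v(x)\le z_2(x)\quad\text{for all } x\in[0,\infty).$$ Then for all $x>0$, $\alpha>0$, $\rho>0$, $\delta>0$ and $\beta,\eta,k,\lambda\in\mathbb{R}$, $$ {}^{\rho}\mathcal{J}^{\alpha,\beta}_{\eta,k}z_2(x)\,{}^{\rho}\mathcal{J}^{\delta,\lambda}_{\eta,k}v(x)+{}^{\rho}\mathcal{J}^{\alpha,\beta}_{\eta,k}v(x)\,{}^{\rho}\mathcal{J}^{\delta,\lambda}_{\eta,k}z_1(x)\ \ge\ {}^{\rho}\mathcal{J}^{\alpha,\beta}_{\eta,k}v(x)\,{}^{\rho}\mathcal{J}^{\delta,\lambda}_{\eta,k}v(x)+{}^{\rho}\mathcal{J}^{\alpha,\beta}_{\eta,k}z_2(x)\,{}^{\rho}\mathcal{J}^{\delta,\lambda}_{\eta,k}z_1(x).$$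
   Context: For a function $f$ on $[0,\infty)$, $x>0$, $\alpha>0$, $\rho>0$ and $\beta,\eta,k\in\mathbb{R}$, the generalized Katugampola fractional integral is $${}^{\rho}\mathcal{J}^{\alpha,\beta}_{\eta,k}f(x)=\frac{\rho^{1-\beta}x^{k}}{\Gamma(\alpha)}\int_0^x\frac{\tau^{\rho(\eta+1)-1}}{(x^\rho-\tau^\rho)^{1-\alpha}}f(\tau)\,d\tau,$$ defined whenever the integral exists; all such integrals appearing in the statement are assumed to exist. *)

theory Defs
  imports "HOL-Analysis.Analysis"
begin

definition kat_kernel :: "real \<Rightarrow> real \<Rightarrow> real \<Rightarrow> real \<Rightarrow> real \<Rightarrow> real" where
  "kat_kernel rho alpha eta x tau =
     tau powr (rho * (eta + 1) - 1) / (x powr rho - tau powr rho) powr (1 - alpha)"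

definition katJ :: "real \<Rightarrow> real \<Rightarrow> real \<Rightarrow> real \<Rightarrow> real \<Rightarrow> (real \<Rightarrow> real) \<Rightarrow> real \<Rightarrow> real" where
  "katJ rho alpha beta eta k f x =
     rho powr (1 - beta) * x powr k / Gamma alpha *
     integral {0..x} (\<lambda>tau. kat_kernel rho alpha eta x tau * f tau)"

definition katJ_exists :: "real \<Rightarrow> real \<Rightarrow> real \<Rightarrow> (real \<Rightarrow> real) \<Rightarrow> real \<Rightarrow> bool" where
  "katJ_exists rho alpha eta f x \<longleftrightarrow>
     (\<lambda>tau. kat_kernel rho alpha eta x tau * f tau) integrable_on {0..x}"

end

theory Submission
  imports Defs
begin

text \<open>The kernel and the factor \<open>rho powr (1 - beta) * x powr k / Gamma alpha\<close> are
  nonnegative (recall \<open>Gamma alpha > 0\<close> for \<open>alpha > 0\<close>), so the operator is monotone.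
  Hence \<open>J z1 \<le> J v \<le> J z2\<close> for both orders, and the inequality is the expansion of
  \<open>(J\<^sup>\<alpha> z2 - J\<^sup>\<alpha> v) * (J\<^sup>\<delta> v - J\<^sup>\<delta> z1) \<ge> 0\<close>.\<close>

lemma kat_kernel_nonneg: "0 \<le> kat_kernel rho alpha eta x tau"
  unfolding kat_kernel_def by simp

lemma katJ_mono:
  assumes "alpha > 0"
    and "katJ_exists rho alpha eta f x" and "katJ_exists rho alpha eta g x"
    and "\<And>t. t \<in> {0..x} \<Longrightarrow> f t \<le> g t"
  shows "katJ rho alpha beta eta k f x \<le> katJ rho alpha beta eta k g x"
proof -
  have factor_nonneg: "0 \<le> rho powr (1 - beta) * x powr k / Gamma alpha"
    using Gamma_real_pos[OF \<open>alpha > 0\<close>] by simp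
  have "integral {0..x} (\<lambda>tau. kat_kernel rho alpha eta x tau * f tau)
      \<le> integral {0..x} (\<lambda>tau. kat_kernel rho alpha eta x tau * g tau)"
  proof (rule integral_le)
    show "(\<lambda>tau. kat_kernel rho alpha eta x tau * f tau) integrable_on {0..x}"
      and "(\<lambda>tau. kat_kernel rho alpha eta x tau * g tau) integrable_on {0..x}"
      using assms(2,3) unfolding katJ_exists_def by auto
  next
    fix tau assume "tau \<in> {0..x}"
    then show "kat_kernel rho alpha eta x tau * f tau \<le> kat_kernel rho alpha eta x tau * g tau"
      by (simp add: assms(4) kat_kernel_nonneg mult_left_mono)
  qed
  then show ?thesis
    unfolding katJ_def using factor_nonneg by (rule mult_left_mono)
qed

theorem theorem1:
  fixes v z1 z2 :: "real \<Rightarrow> real"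
    and x alpha rho delta beta eta k lambda :: real
  assumes "v integrable_on {0..}" and "z1 integrable_on {0..}" and "z2 integrable_on {0..}"
    and "\<And>t. t \<ge> 0 \<Longrightarrow> z1 t \<le> v t" and "\<And>t. t \<ge> 0 \<Longrightarrow> v t \<le> z2 t"
    and "x > 0" and "alpha > 0" and "rho > 0" and "delta > 0"
    and "katJ_exists rho alpha eta v x" and "katJ_exists rho alpha eta z1 x"
    and "katJ_exists rho alpha eta z2 x"
    and "katJ_exists rho delta eta v x" and "katJ_exists rho delta eta z1 x"
    and "katJ_exists rho delta eta z2 x"
  shows "katJ rho alpha beta eta k z2 x * katJ rho delta lambda eta k v x
           + katJ rho alpha beta eta k v x * katJ rho delta lambda eta k z1 x
         \<ge> katJ rho alpha beta eta k v x * katJ rho delta lambda eta k v x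
           + katJ rho alpha beta eta k z2 x * katJ rho delta lambda eta k z1 x"
proof -
  have upper: "katJ rho alpha beta eta k v x \<le> katJ rho alpha beta eta k z2 x"
    by (rule katJ_mono) (use assms in auto)
  have lower: "katJ rho delta lambda eta k z1 x \<le> katJ rho delta lambda eta k v x"
    by (rule katJ_mono) (use assms in auto)
  have "0 \<le> (katJ rho alpha beta eta k z2 x - katJ rho alpha beta eta k v x)
          * (katJ rho delta lambda eta k v x - katJ rho delta lambda eta k z1 x)"
    using upper lower by simp
  then show ?thesis
    by (simp add: algebra_simps)
qed

end
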